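(* Let $A=\bigoplus_iA^i$ be a graded commutative algebra with unit $1\in A^0$ over a field $\mathbb{K}$ of characteristic $0$, fix an integer $k$, and let $f\in\operatorname{Hom}^*_{\mathbb{K}}(A,A)$ be homogeneous. The following are equivalent: (1) $f\in\operatorname{Diff}_2(A)$ and $f(1)=0$; (2) for all homogeneous $a,b,c\in A$, \[f(abc)+f(a)bc+(-1)^{\bar a\bar b}f(b)ac+(-1)^{\bar c(\bar a+\bar b)}f(c)ab=f(ab)c+(-1)^{\bar a(\bar b+\bar c)}f(bc)a+(-1)^{\bar b\bar c}f(ac)b;\] (3) the bilinear map $\Phi(a,b)=f(ab)-f(a)b-(-1)^{\bar a\bar f}af(b)$ satisfies $\Phi(a,bc)=\Phi(a,b)c+(-1)^{(\bar a+\bar f)\bar b}b\Phi(a,c)$ for all homogeneous $a,b,c$; (4) $[f,\mu_2]=[[f,\mu_1],\mu_1]$ in $D(A[2k])$.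
   Context: $\bar a$ denotes degree. Elements $a\in A$ act on $A$ by left multiplication, and $[\,,\,]$ is the graded commutator on $\operatorname{Hom}^*_{\mathbb{K}}(A,A)$. Differential operators of order $\le k$: $\operatorname{Diff}_k(A)=0$ for $k<0$ and, for $k\ge0$, $\operatorname{Diff}_k(A)=\{f\in\operatorname{Hom}^*_{\mathbb{K}}(A,A)\mid [f,a]\in\operatorname{Diff}_{k-1}(A)\ \forall a\in A\}$. For a graded vector space $V$, $V[2k]^i=V^{i+2k}$; $D(V)=\prod_{i\ge0}D_i(V)$ with $D_i(V)=\operatorname{Hom}^*_{\mathbb{K}}(\bigodot^{i+1}V,V)$, with the graded Lie bracket $[f,g]=f\bullet g-(-1)^{\bar f\bar g}g\bullet f$ for $f\in D_n(V),g\in D_m(V)$, where $f\bullet g(a_0,\dots,a_{n+m})=\sum_\sigma\varepsilon(\sigma)f(g(a_{\sigma(0)},\dots,a_{\sigma(m)}),a_{\sigma(m+1)},\dots,a_{\sigma(n+m)})$ over $(m+1,n)$-unshuffles with Koszul sign. $\operatorname{Hom}^*_{\mathbb{K}}(A,A)$ is identified with $D_0(A[2k])$, and $\mu_n\in D_n(A[2k])$ (degree $2kn$) is the multiplication $\mu_n(a_0\odot\cdots\odot a_n)=a_0\cdots a_n$. A map satisfying these equivalent conditions is called a quasi-Batalin–Vilkovisky (quasi-BV) operator. *)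

theory Defs
  imports Complex_Main
begin

definition ksign :: "int \<Rightarrow> 'a::ring_1" where
  "ksign n = (if even n then 1 else - 1)"

text \<open>A graded commutative algebra A = (+)_i A^i with unit 1 in A^0 over a field K:
  the carrier is the whole type 'a, scalar multiplication is smult, and G i is A^i.\<close>
definition graded_comm_alg :: "('k::field \<Rightarrow> 'a::ring_1 \<Rightarrow> 'a) \<Rightarrow> (int \<Rightarrow> 'a set) \<Rightarrow> bool" where
  "graded_comm_alg smult G \<longleftrightarrow>
     Vector_Spaces.vector_space smult \<and>
     (\<forall>c a b. smult c (a * b) = smult c a * b \<and> smult c (a * b) = a * smult c b) \<and>
     (\<forall>i. 0 \<in> G i \<and> (\<forall>x\<in>G i. \<forall>y\<in>G i. x + y \<in> G i) \<and> (\<forall>c. \<forall>x\<in>G i. smult c x \<in> G i)) \<and>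
     (\<forall>x. \<exists>!cs :: int \<Rightarrow> 'a. finite {i. cs i \<noteq> 0} \<and> (\<forall>i. cs i \<in> G i) \<and>
            x = (\<Sum>i\<in>{i. cs i \<noteq> 0}. cs i)) \<and>
     (\<forall>i j. \<forall>a\<in>G i. \<forall>b\<in>G j. a * b \<in> G (i + j)) \<and>
     (\<forall>i j. \<forall>a\<in>G i. \<forall>b\<in>G j. a * b = ksign (i * j) * (b * a)) \<and>
     1 \<in> G 0"

definition hom_map :: "('k::field \<Rightarrow> 'a::ring_1 \<Rightarrow> 'a) \<Rightarrow> (int \<Rightarrow> 'a set) \<Rightarrow> int \<Rightarrow> ('a \<Rightarrow> 'a) \<Rightarrow> bool" where
  "hom_map smult G d f \<longleftrightarrow> Vector_Spaces.linear smult smult f \<and> (\<forall>i. \<forall>x\<in>G i. f x \<in> G (i + d))"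

text \<open>Graded commutator [f, a] of a degree-d map f with left multiplication by a of degree e.\<close>
definition gcomm :: "int \<Rightarrow> ('a::ring_1 \<Rightarrow> 'a) \<Rightarrow> int \<Rightarrow> 'a \<Rightarrow> ('a \<Rightarrow> 'a)" where
  "gcomm d f e a = (\<lambda>x. f (a * x) - ksign (d * e) * (a * f x))"

text \<open>is_diffop G k d f: the homogeneous degree-d map f lies in Diff_k(A)
  (Diff_{-1} = 0; commutators with homogeneous a, which suffices by linearity).\<close>
fun is_diffop :: "(int \<Rightarrow> 'a::ring_1 set) \<Rightarrow> nat \<Rightarrow> int \<Rightarrow> ('a \<Rightarrow> 'a) \<Rightarrow> bool" where
  "is_diffop G 0 d f = (\<forall>e. \<forall>a\<in>G e. \<forall>x. gcomm d f e a x = 0)"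
| "is_diffop G (Suc k) d f = (\<forall>e. \<forall>a\<in>G e. is_diffop G k (d + e) (gcomm d f e a))"

text \<open>Elements of D_n(V) are represented by their values on homogeneous arguments:
  a function taking the list of degrees (in V) and the list of the n+1 arguments.\<close>
type_synonym 'a coder = "int list \<Rightarrow> 'a list \<Rightarrow> 'a"

text \<open>Koszul sign of the (m+1,n)-unshuffle moving the entries indexed by S to the front.\<close>
definition koszul_unshuffle :: "int list \<Rightarrow> nat set \<Rightarrow> 'a::ring_1" where
  "koszul_unshuffle ds S =
     ksign (\<Sum>(i, j)\<in>{(i, j). i < j \<and> j < length ds \<and> i \<notin> S \<and> j \<in> S}. ds ! i * ds ! j)"

definition bullet :: "nat \<Rightarrow> int \<Rightarrow> 'a::ring_1 coder \<Rightarrow> 'a coder \<Rightarrow> 'a coder" where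
  "bullet m dg f g = (\<lambda>ds as.
     \<Sum>S\<in>{S. S \<subseteq> {..<length as} \<and> card S = Suc m}.
       koszul_unshuffle ds S *
       f ((dg + sum_list (nths ds S)) # nths ds (- S)) (g (nths ds S) (nths as S) # nths as (- S)))"

definition gbracket :: "nat \<Rightarrow> int \<Rightarrow> 'a::ring_1 coder \<Rightarrow> nat \<Rightarrow> int \<Rightarrow> 'a coder \<Rightarrow> 'a coder" where
  "gbracket n df f m dg g = (\<lambda>ds as. bullet m dg f g ds as - ksign (df * dg) * bullet n df g f ds as)"

text \<open>Hom^*(A,A) identified with D_0(A[2k]); the multiplications mu_n.\<close>
definition D0_of :: "('a \<Rightarrow> 'a) \<Rightarrow> 'a coder" where
  "D0_of f = (\<lambda>ds as. f (hd as))"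

definition mu :: "'a::monoid_mult coder" where
  "mu = (\<lambda>ds as. prod_list as)"

end

(*
  Each condition is equivalent to the seven-term identity (2). If f(1) = 0, the triple
  commutator [[[f,a],b],c] evaluated at 1 is exactly the seven-term defect. Conversely, if the
  defect vanishes, then H = [[f,a],b] satisfies H y = \<plusminus>y H(1) for homogeneous y, so H is a
  (signed) multiplication operator and [H,c] = 0; taking a = b = c = 1 in (2) gives f(1) = 0.
  The failure of \<Phi>(a,-) to be a derivation is again the seven-term defect, which gives (3).
  Expanding both sides of (4) on three homogeneous arguments, [f,\<mu>\<^sub>2] - [[f,\<mu>\<^sub>1],\<mu>\<^sub>1] is
  -2 times the defect, and the factor 2 is invertible in characteristic 0.
*)

theory Submission
  imports Defs
begin

lemma vector_space_double_eq_0: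
  fixes scale :: "'k::field_char_0 \<Rightarrow> 'v::ab_group_add \<Rightarrow> 'v" and x :: 'v
  assumes "vector_space scale" and "x + x = 0"
  shows "x = 0"
proof -
  interpret vector_space scale by fact
  have "x = scale (1 / 2) (scale (1 + 1) x)"
    by simp
  also have "scale (1 + 1) x = x + x"
    by (simp only: scale_left_distrib scale_one)
  finally show ?thesis
    using assms(2) by simp
qed

lemma ksign_0 [simp]: "ksign 0 = 1"
  by (simp add: ksign_def)

lemma subsets_card_one: "{S. S \<subseteq> A \<and> card S = Suc 0} = (\<lambda>x. {x}) ` A"
  by (auto simp: card_Suc_eq)

lemma subsets_lessThan_card_eq:
  assumes "m = n" shows "{S. S \<subseteq> {..<n} \<and> card S = m} = {{..<n}}"
proof -
  have "S = {..<n}" if "S \<subseteq> {..<n}" "card S = n" for S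
    using card_subset_eq[OF finite_lessThan that(1)] that(2) by simp
  then show ?thesis using assms by auto
qed

lemma subsets_card_eq_pred_card:
  assumes "card A = Suc m"
  shows "{S. S \<subseteq> A \<and> card S = m} = (\<lambda>x. A - {x}) ` A"
proof (intro set_eqI iffI)
  fix S assume "S \<in> {S. S \<subseteq> A \<and> card S = m}"
  then have S: "S \<subseteq> A" "card S = m" by auto
  have "finite A" using assms card.infinite by fastforce
  then have "card (A - S) = Suc 0" using S assms by (simp add: card_Diff_subset finite_subset)
  then obtain x where "A - S = {x}" by (auto simp: card_Suc_eq)
  then show "S \<in> (\<lambda>x. A - {x}) ` A" using S by blast
next
  fix S assume "S \<in> (\<lambda>x. A - {x}) ` A"
  then show "S \<in> {S. S \<subseteq> A \<and> card S = m}" using assms by auto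
qed

lemma sum_image_singleton: "(\<Sum>S\<in>(\<lambda>x. {x}) ` A. g S) = (\<Sum>x\<in>A. g {x})"
  by (simp add: sum.reindex)

lemma sum_image_Diff_singleton: "(\<Sum>S\<in>(\<lambda>x. A - {x}) ` A. g S) = (\<Sum>x\<in>A. g (A - {x}))"
proof -
  have "inj_on (\<lambda>x. A - {x}) A" unfolding inj_on_def by blast
  then show ?thesis by (simp add: sum.reindex)
qed

lemma koszul_unshuffle_length2:
  "koszul_unshuffle [a, b] S = ksign (if 0 \<notin> S \<and> 1 \<in> S then a * b else 0)"
proof -
  have "{(i, j). i < j \<and> j < length [a, b] \<and> i \<notin> S \<and> j \<in> S}
      = (if 0 \<notin> S \<and> 1 \<in> S then {(0, 1)} else {})"
    by (auto simp: less_Suc_eq)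
  then show ?thesis unfolding koszul_unshuffle_def by simp
qed

lemma koszul_unshuffle_length3:
  "koszul_unshuffle [a, b, c] S = ksign ((if 0 \<notin> S \<and> 1 \<in> S then a * b else 0)
      + (if 0 \<notin> S \<and> 2 \<in> S then a * c else 0) + (if 1 \<notin> S \<and> 2 \<in> S then b * c else 0))"
  (is "_ = ksign ?exponent")
proof -
  have "{(i, j). i < j \<and> j < length [a, b, c] \<and> i \<notin> S \<and> j \<in> S}
      = {p \<in> {(0, 1), (0, 2), (1, 2)}. fst p \<notin> S \<and> snd p \<in> S}"
    by auto
  then have "koszul_unshuffle [a, b, c] S = ksign (\<Sum>p\<in>{(0, 1), (0, 2), (1, 2)}.
      if fst p \<notin> S \<and> snd p \<in> S then [a, b, c] ! fst p * [a, b, c] ! snd p else 0)"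
    unfolding koszul_unshuffle_def by (simp only: sum.inter_filter finite.intros split_beta)
  also have "\<dots> = ksign ?exponent"
    by (simp add: add.assoc)
  finally show ?thesis .
qed

lemma lessThan_2: "{..<2::nat} = {0, 1}"
  by auto

lemma lessThan_3: "{..<3::nat} = {0, 1, 2}"
  by auto

lemmas bracket_evaluation_simps = subsets_card_one subsets_lessThan_card_eq subsets_card_eq_pred_card
  sum_image_singleton sum_image_Diff_singleton lessThan_2 lessThan_3
  koszul_unshuffle_length2 koszul_unshuffle_length3 nths_Cons D0_of_def mu_def

lemma gbracket_D0_mu1:
  "gbracket 0 d (D0_of f) 1 e mu [j0, j1] [a0, a1] =
     f (a0 * a1) - ksign (d * e) * (f a0 * a1 + ksign (j0 * j1) * (f a1 * a0))"
  unfolding gbracket_def bullet_def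
  by (simp only: list.size) (simp add: bracket_evaluation_simps)

lemma gbracket_D0_mu2:
  "gbracket 0 d (D0_of f) 2 e mu [j0, j1, j2] [a0, a1, a2] =
     f (a0 * (a1 * a2)) - ksign (d * e) * (f a0 * (a1 * a2) + ksign (j0 * j1) * (f a1 * (a0 * a2))
       + ksign (j0 * j2 + j1 * j2) * (f a2 * (a0 * a1)))"
  unfolding gbracket_def bullet_def
  by (simp only: list.size) (simp add: bracket_evaluation_simps)

lemma gbracket_mu1:
  "gbracket 1 dg g 1 e mu [j0, j1, j2] [a0, a1, a2] =
     (g [e + (j0 + j1), j2] [a0 * a1, a2] + ksign (j1 * j2) * g [e + (j0 + j2), j1] [a0 * a2, a1]
       + ksign (j0 * j1 + j0 * j2) * g [e + (j1 + j2), j0] [a1 * a2, a0])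
     - ksign (dg * e) * (g [j0, j1] [a0, a1] * a2 + ksign (j1 * j2) * (g [j0, j2] [a0, a2] * a1)
       + ksign (j0 * j1 + j0 * j2) * (g [j1, j2] [a1, a2] * a0))"
  unfolding gbracket_def bullet_def
  by (simp only: list.size) (simp add: bracket_evaluation_simps algebra_simps)

lemma is_diffop_2_iff:
  "is_diffop G 2 d f \<longleftrightarrow>
     (\<forall>i. \<forall>a\<in>G i. \<forall>j. \<forall>b\<in>G j. is_diffop G 0 (d + i + j) (gcomm (d + i) (gcomm d f i a) j b))"
  by (simp add: numeral_2_eq_2)

lemma additive_gcomm: "additive H \<Longrightarrow> additive (gcomm d H e a)"
  unfolding gcomm_def additive_def by (simp add: algebra_simps)

locale graded_comm_ring =
  fixes G :: "int \<Rightarrow> 'a::ring_1 set"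
  assumes mult_mem: "a \<in> G i \<Longrightarrow> b \<in> G j \<Longrightarrow> a * b \<in> G (i + j)"
    and graded_commute: "a \<in> G i \<Longrightarrow> b \<in> G j \<Longrightarrow> a * b = ksign (i * j) * (b * a)"
    and one_mem: "1 \<in> G 0"
    and homogeneous_decomposition: "\<exists>cs. (\<forall>i. cs i \<in> G i) \<and> x = (\<Sum>i\<in>{i. cs i \<noteq> 0}. cs i)"
begin

lemma is_diffop_0_if_gcomm_one:
  assumes "additive H" and gcomm_one: "\<And>m y. y \<in> G m \<Longrightarrow> gcomm e H m y 1 = 0"
  shows "is_diffop G 0 e H"
  unfolding is_diffop.simps
proof (intro allI ballI)
  fix l c x assume c: "c \<in> G l"
  have H_homogeneous: "H y = ksign (e * m) * (y * H 1)" if "y \<in> G m" for m y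
    using gcomm_one[OF that] unfolding gcomm_def by simp
  have on_homogeneous: "gcomm e H l c y = 0" if y: "y \<in> G m" for m y
    using H_homogeneous[OF mult_mem[OF c y]] H_homogeneous[OF y]
    by (simp add: gcomm_def ksign_def distrib_left mult.assoc)
  interpret additive "gcomm e H l c"
    using \<open>additive H\<close> by (rule additive_gcomm)
  obtain cs where "\<forall>i. cs i \<in> G i" and "x = (\<Sum>i\<in>{i. cs i \<noteq> 0}. cs i)"
    using homogeneous_decomposition by blast
  then show "gcomm e H l c x = 0"
    by (auto simp: sum intro!: sum.neutral on_homogeneous)
qed

end

lemma graded_comm_ring_if_graded_comm_alg:
  fixes smult :: "'k::field \<Rightarrow> 'a::ring_1 \<Rightarrow> 'a"
  assumes "graded_comm_alg smult G"
  shows "graded_comm_ring G"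
  using assms unfolding graded_comm_alg_def Ex1_def by unfold_locales blast+

locale graded_additive_map = graded_comm_ring G + additive f
  for G :: "int \<Rightarrow> 'a::ring_1 set" and f :: "'a \<Rightarrow> 'a" +
  fixes d :: int
  assumes map_mem: "a \<in> G i \<Longrightarrow> f a \<in> G (i + d)"
begin

definition seven_term_defect :: "int \<Rightarrow> int \<Rightarrow> int \<Rightarrow> 'a \<Rightarrow> 'a \<Rightarrow> 'a \<Rightarrow> 'a" where
  "seven_term_defect i j l a b c =
     (f (a * b * c) + f a * b * c + ksign (i * j) * (f b * a * c) + ksign (l * (i + j)) * (f c * a * b))
     - (f (a * b) * c + ksign (i * (j + l)) * (f (b * c) * a) + ksign (j * l) * (f (a * c) * b))"

text \<open>The map \<Phi> of condition (3), with i the degree of its first argument.\<close>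

definition derivation_defect :: "int \<Rightarrow> 'a \<Rightarrow> 'a \<Rightarrow> 'a" where
  "derivation_defect i a b = f (a * b) - f a * b - ksign (i * d) * (a * f b)"

lemma mult_map_commute:
  "a \<in> G i \<Longrightarrow> y \<in> G m \<Longrightarrow> a * f y = ksign (i * (m + d)) * (f y * a)"
  using graded_commute map_mem by blast

lemma mult_mult_map_commute:
  assumes a: "a \<in> G i" and b: "b \<in> G j" and y: "y \<in> G m"
  shows "b * (a * f y) = ksign (j * i + (i + j) * (m + d)) * (f y * (a * b))"
proof -
  have "b * (a * f y) = ksign (j * i) * ((a * b) * f y)"
    using graded_commute[OF b a] by (simp add: mult.assoc [symmetric])
  also have "\<dots> = ksign (j * i) * (ksign ((i + j) * (m + d)) * (f y * (a * b)))"
    using mult_map_commute[OF mult_mem[OF a b] y] by simp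
  finally show ?thesis
    by (simp add: ksign_def)
qed

lemma gcomm_gcomm_gcomm_one_eq_seven_term_defect:
  assumes f1: "f 1 = 0" and a: "a \<in> G i" and b: "b \<in> G j" and c: "c \<in> G l"
  shows "gcomm (d + i + j) (gcomm (d + i) (gcomm d f i a) j b) l c 1 = seven_term_defect i j l a b c"
  using mult_map_commute[OF a mult_mem[OF b c]] mult_map_commute[OF b mult_mem[OF a c]]
    mult_map_commute[OF c mult_mem[OF a b]] mult_mult_map_commute[OF a b c]
    mult_mult_map_commute[OF a c b] mult_mult_map_commute[OF b c a]
  unfolding gcomm_def seven_term_defect_def
  by (cases "even i"; cases "even j"; cases "even l"; cases "even d";
      simp add: f1 ksign_def algebra_simps)

lemma derivation_defect_leibniz_gap:
  assumes a: "a \<in> G i" and b: "b \<in> G j" and c: "c \<in> G l"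
  shows "derivation_defect i a (b * c) - (derivation_defect i a b * c
           + ksign ((i + d) * j) * (b * derivation_defect i a c))
         = seven_term_defect i j l a b c"
proof -
  have "a * (f b * c) = ksign (i * (j + d)) * (f b * (a * c))"
    using mult_map_commute[OF a b] by (simp flip: mult.assoc)
  moreover have "b * (f a * c) = ksign (j * (i + d)) * (f a * (b * c))"
    using mult_map_commute[OF b a] by (simp flip: mult.assoc)
  ultimately show ?thesis
    using mult_map_commute[OF a mult_mem[OF b c]] mult_map_commute[OF b mult_mem[OF a c]]
      mult_mult_map_commute[OF a b c]
    unfolding derivation_defect_def seven_term_defect_def
    by (cases "even i"; cases "even j"; cases "even l"; cases "even d";
        simp add: ksign_def algebra_simps)
qed

text \<open>Elements of A[2k] of degree j lie in G (j + 2k); the even shift does not affect the signs.\<close>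

lemma gbracket_diff_eq_minus_double_seven_term_defect:
  assumes a0: "a0 \<in> G (j0 + 2 * k)" and a1: "a1 \<in> G (j1 + 2 * k)" and a2: "a2 \<in> G (j2 + 2 * k)"
  defines "D \<equiv> seven_term_defect (j0 + 2 * k) (j1 + 2 * k) (j2 + 2 * k) a0 a1 a2"
  shows "gbracket 0 d (D0_of f) 2 (4 * k) mu [j0, j1, j2] [a0, a1, a2]
     - gbracket 1 (d + 2 * k) (gbracket 0 d (D0_of f) 1 (2 * k) mu) 1 (2 * k) mu [j0, j1, j2] [a0, a1, a2]
     = - (D + D)"
proof -
  have "a1 * (a0 * a2) = ksign ((j1 + 2 * k) * (j0 + 2 * k)) * (a0 * (a1 * a2))"
    using graded_commute[OF a1 a0] by (simp flip: mult.assoc)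
  then show ?thesis
    using graded_commute[OF a2 a1] graded_commute[OF a2 a0] graded_commute[OF a1 a0]
    unfolding gbracket_D0_mu2 gbracket_mu1 gbracket_D0_mu1 D_def seven_term_defect_def
    by (cases "even j0"; cases "even j1"; cases "even j2";
        simp add: ksign_def algebra_simps minus)
qed

definition seven_term_identity :: bool where
  "seven_term_identity \<longleftrightarrow>
     (\<forall>i j l a b c. a \<in> G i \<longrightarrow> b \<in> G j \<longrightarrow> c \<in> G l \<longrightarrow> seven_term_defect i j l a b c = 0)"

lemma seven_term_identity_imp_map_one_eq_0:
  assumes seven_term_identity
  shows "f 1 = 0"
proof -
  have "seven_term_defect 0 0 0 1 1 1 = 0"
    using assms one_mem unfolding seven_term_identity_def by blast
  then show ?thesis
    by (simp add: seven_term_defect_def)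
qed

lemma is_diffop_2_iff_seven_term_identity:
  "is_diffop G 2 d f \<and> f 1 = 0 \<longleftrightarrow> seven_term_identity"
proof
  assume "is_diffop G 2 d f \<and> f 1 = 0"
  then have diffop: "is_diffop G 2 d f" and f1: "f 1 = 0" by simp_all
  show seven_term_identity
    unfolding seven_term_identity_def
  proof (intro allI impI)
    fix i j l a b c assume a: "a \<in> G i" and b: "b \<in> G j" and c: "c \<in> G l"
    have "gcomm (d + i + j) (gcomm (d + i) (gcomm d f i a) j b) l c 1 = 0"
      using diffop a b c unfolding is_diffop_2_iff by simp
    then show "seven_term_defect i j l a b c = 0"
      by (simp add: gcomm_gcomm_gcomm_one_eq_seven_term_defect[OF f1 a b c])
  qed
next
  assume seven_term: seven_term_identity
  then have f1: "f 1 = 0"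
    by (rule seven_term_identity_imp_map_one_eq_0)
  have "is_diffop G 0 (d + i + j) (gcomm (d + i) (gcomm d f i a) j b)"
    if "a \<in> G i" "b \<in> G j" for i j a b
  proof (rule is_diffop_0_if_gcomm_one)
    show "additive (gcomm (d + i) (gcomm d f i a) j b)"
      by (intro additive_gcomm additive_axioms)
    show "gcomm (d + i + j) (gcomm (d + i) (gcomm d f i a) j b) m y 1 = 0" if "y \<in> G m" for m y
      using seven_term \<open>a \<in> G i\<close> \<open>b \<in> G j\<close> \<open>y \<in> G m\<close>
      by (simp add: gcomm_gcomm_gcomm_one_eq_seven_term_defect f1 seven_term_identity_def)
  qed
  then show "is_diffop G 2 d f \<and> f 1 = 0"
    using f1 by (simp add: is_diffop_2_iff)
qed

lemma seven_term_identity_iff_derivation_defect: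
  "seven_term_identity \<longleftrightarrow>
     (\<forall>i j l a b c. a \<in> G i \<longrightarrow> b \<in> G j \<longrightarrow> c \<in> G l \<longrightarrow>
        derivation_defect i a (b * c) = derivation_defect i a b * c
          + ksign ((i + d) * j) * (b * derivation_defect i a c))"
proof -
  have "derivation_defect i a (b * c) = derivation_defect i a b * c
          + ksign ((i + d) * j) * (b * derivation_defect i a c)
        \<longleftrightarrow> seven_term_defect i j l a b c = 0"
    if "a \<in> G i" "b \<in> G j" "c \<in> G l" for i j l a b c
    by (simp only: eq_iff_diff_eq_0[of "derivation_defect i a (b * c)"]
        derivation_defect_leibniz_gap[OF that])
  then show ?thesis
    unfolding seven_term_identity_def by blast
qed

lemma seven_term_identity_iff_gbracket:
  assumes no_2_torsion: "\<And>x :: 'a. x + x = 0 \<Longrightarrow> x = 0"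
  shows "seven_term_identity \<longleftrightarrow>
    (\<forall>j0 j1 j2 a0 a1 a2. a0 \<in> G (j0 + 2 * k) \<longrightarrow> a1 \<in> G (j1 + 2 * k) \<longrightarrow> a2 \<in> G (j2 + 2 * k) \<longrightarrow>
       gbracket 0 d (D0_of f) 2 (4 * k) mu [j0, j1, j2] [a0, a1, a2]
       = gbracket 1 (d + 2 * k) (gbracket 0 d (D0_of f) 1 (2 * k) mu) 1 (2 * k) mu [j0, j1, j2] [a0, a1, a2])"
    (is "_ \<longleftrightarrow> (\<forall>j0 j1 j2 a0 a1 a2. _ \<longrightarrow> _ \<longrightarrow> _ \<longrightarrow> ?bracket_eq j0 j1 j2 a0 a1 a2)")
proof
  assume seven_term_identity
  then show "\<forall>j0 j1 j2 a0 a1 a2. a0 \<in> G (j0 + 2 * k) \<longrightarrow> a1 \<in> G (j1 + 2 * k) \<longrightarrow>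
      a2 \<in> G (j2 + 2 * k) \<longrightarrow> ?bracket_eq j0 j1 j2 a0 a1 a2"
  proof (intro allI impI)
    fix j0 j1 j2 a0 a1 a2
    assume a0: "a0 \<in> G (j0 + 2 * k)" and a1: "a1 \<in> G (j1 + 2 * k)" and a2: "a2 \<in> G (j2 + 2 * k)"
    have "seven_term_defect (j0 + 2 * k) (j1 + 2 * k) (j2 + 2 * k) a0 a1 a2 = 0"
      using \<open>seven_term_identity\<close> a0 a1 a2 unfolding seven_term_identity_def by blast
    then show "?bracket_eq j0 j1 j2 a0 a1 a2"
      using gbracket_diff_eq_minus_double_seven_term_defect[OF a0 a1 a2] by simp
  qed
next
  assume brackets: "\<forall>j0 j1 j2 a0 a1 a2. a0 \<in> G (j0 + 2 * k) \<longrightarrow> a1 \<in> G (j1 + 2 * k) \<longrightarrow>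
      a2 \<in> G (j2 + 2 * k) \<longrightarrow> ?bracket_eq j0 j1 j2 a0 a1 a2"
  show seven_term_identity
    unfolding seven_term_identity_def
  proof (intro allI impI)
    fix i j l a b c assume "a \<in> G i" "b \<in> G j" "c \<in> G l"
    then have shifted: "a \<in> G ((i - 2 * k) + 2 * k)" "b \<in> G ((j - 2 * k) + 2 * k)"
        "c \<in> G ((l - 2 * k) + 2 * k)"
      by simp_all
    have "?bracket_eq (i - 2 * k) (j - 2 * k) (l - 2 * k) a b c"
      using brackets shifted by blast
    then have "0 = - (seven_term_defect i j l a b c + seven_term_defect i j l a b c)"
      using gbracket_diff_eq_minus_double_seven_term_defect[OF shifted] by (simp only: diff_self diff_add_cancel)
    then have "seven_term_defect i j l a b c + seven_term_defect i j l a b c = 0"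
      by (metis neg_0_equal_iff_equal)
    then show "seven_term_defect i j l a b c = 0"
      by (rule no_2_torsion)
  qed
qed

end

lemma graded_additive_map_if_hom_map:
  assumes "graded_comm_alg smult G" and "hom_map smult G d f"
  shows "graded_additive_map G f d"
proof (intro graded_additive_map.intro graded_comm_ring_if_graded_comm_alg[OF assms(1)])
  have "Vector_Spaces.linear smult smult f" and "\<forall>i. \<forall>x\<in>G i. f x \<in> G (i + d)"
    using assms(2) unfolding hom_map_def by blast+
  then show "additive f" and "graded_additive_map_axioms G f d"
    by (unfold_locales) (auto simp: Vector_Spaces.linear_iff)
qed

theorem theorem3p3:
  fixes smult :: "'k::field_char_0 \<Rightarrow> 'a::ring_1 \<Rightarrow> 'a"
    and G :: "int \<Rightarrow> 'a set" and k :: int and d :: int and f :: "'a \<Rightarrow> 'a"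
  assumes alg: "graded_comm_alg smult G"
    and hf: "hom_map smult G d f"
  defines "P1 \<equiv> is_diffop G 2 d f \<and> f 1 = 0"
    and "P2 \<equiv> \<forall>i j l a b c. a \<in> G i \<longrightarrow> b \<in> G j \<longrightarrow> c \<in> G l \<longrightarrow>
            f (a * b * c) + f a * b * c + ksign (i * j) * (f b * a * c) + ksign (l * (i + j)) * (f c * a * b)
            = f (a * b) * c + ksign (i * (j + l)) * (f (b * c) * a) + ksign (j * l) * (f (a * c) * b)"
    and "P3 \<equiv> (let \<Phi> = (\<lambda>i a b. f (a * b) - f a * b - ksign (i * d) * (a * f b)) in
            \<forall>i j l a b c. a \<in> G i \<longrightarrow> b \<in> G j \<longrightarrow> c \<in> G l \<longrightarrow>
              \<Phi> i a (b * c) = \<Phi> i a b * c + ksign ((i + d) * j) * (b * \<Phi> i a c))"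
    and "P4 \<equiv> \<forall>j0 j1 j2 a0 a1 a2. a0 \<in> G (j0 + 2 * k) \<longrightarrow> a1 \<in> G (j1 + 2 * k) \<longrightarrow> a2 \<in> G (j2 + 2 * k) \<longrightarrow>
            gbracket 0 d (D0_of f) 2 (4 * k) mu [j0, j1, j2] [a0, a1, a2]
            = gbracket 1 (d + 2 * k) (gbracket 0 d (D0_of f) 1 (2 * k) mu) 1 (2 * k) mu [j0, j1, j2] [a0, a1, a2]"
  shows "(P1 \<longleftrightarrow> P2) \<and> (P1 \<longleftrightarrow> P3) \<and> (P1 \<longleftrightarrow> P4)"
proof -
  interpret graded_additive_map G f d
    using alg hf by (rule graded_additive_map_if_hom_map)
  have "vector_space smult"
    using alg unfolding graded_comm_alg_def by blast
  note no_2_torsion = vector_space_double_eq_0[OF this]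
  have "P1 \<longleftrightarrow> seven_term_identity"
    unfolding P1_def by (rule is_diffop_2_iff_seven_term_identity)
  moreover have "P2 \<longleftrightarrow> seven_term_identity"
    unfolding P2_def seven_term_identity_def seven_term_defect_def by simp
  moreover have "P3 \<longleftrightarrow> seven_term_identity"
    unfolding P3_def Let_def seven_term_identity_iff_derivation_defect derivation_defect_def ..
  moreover have "P4 \<longleftrightarrow> seven_term_identity"
    unfolding P4_def by (rule seven_term_identity_iff_gbracket[OF no_2_torsion, symmetric])
  ultimately show ?thesis
    by blast
qed

end
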